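(* Let $K$ be a minimal complete valuation field and let $R$ and $S$ be unital $K$-Banach algebras. Then the canonical map $R\hat\otimes_{\mathbb Z}S\to R\hat\otimes_K S$ (identity on simple tensors) is an isometric isomorphism of Banach rings, and likewise the canonical map $R\hat\otimes^{\mathrm{um}}_{\mathbb Z}S\to R\hat\otimes^{\mathrm{um}}_K S$ is an isometric isomorphism.
   Context: A Banach ring is a ring complete w.r.t. a submultiplicative norm; unital means $\|1\|=1$. A complete valuation field $K$ is minimal if it has no proper closed subfield; up to isometric isomorphism these are $\mathbb Q$ and $\mathbb F_p$ with the trivial absolute value, $\mathbb R$ with $|\cdot|^\upsilon$ ($0<\upsilon\le 1$, $|\cdot|$ Euclidean), and $\mathbb Q_p$ with $|\cdot|_p^\omega$ ($\omega>0$). A unital $K$-Banach algebra is a unital Banach ring $A$ together with a contractive unital ring homomorphism from $K$ into the center of $A$. Projective tensor products: for a commutative unital Banach ring $T$ and Banach $T$-modules $X,Y$, on the algebraic tensor product $X\otimes_T Y$ put $\|z\|_\wedge=\inf\{\sum_k\|a_k\|\|b_k\|\}$ and $\|z\|^{\mathrm{um}}_\wedge=\inf\{\max_k\|a_k\|\|b_k\|\}$, the infima over all representations $z=\sum_{k=1}^n a_k\otimes b_k$; $X\hat\otimes_T Y$ (resp. $X\hat\otimes^{\mathrm{um}}_T Y$) is the completion of $X\otimes_T Y$ modulo the kernel of $\|\cdot\|_\wedge$ (resp. $\|\cdot\|^{\mathrm{um}}_\wedge$). Every unital Banach ring is regarded as a $\mathbb Z$-algebra, $\mathbb Z$ carrying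 the Euclidean absolute value; for unital Banach $T$-algebras these tensor products are Banach rings with $(a\otimes b)(c\otimes d)=ac\otimes bd$. *)

theory Defs
  imports Complex_Main
begin

definition norm_complete :: "('a::ab_group_add \<Rightarrow> real) \<Rightarrow> bool" where
  "norm_complete n \<longleftrightarrow>
     (\<forall>X::nat \<Rightarrow> 'a.
        (\<forall>e>0. \<exists>N. \<forall>m\<ge>N. \<forall>k\<ge>N. n (X m - X k) < e) \<longrightarrow>
        (\<exists>L. (\<lambda>k. n (X k - L)) \<longlonglongrightarrow> 0))"

definition banach_ring :: "('a::ring_1 \<Rightarrow> real) \<Rightarrow> bool" where
  "banach_ring n \<longleftrightarrow>
     (\<forall>x. 0 \<le> n x) \<and> (\<forall>x. n x = 0 \<longleftrightarrow> x = 0) \<and>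
     (\<forall>x. n (- x) = n x) \<and>
     (\<forall>x y. n (x + y) \<le> n x + n y) \<and>
     (\<forall>x y. n (x * y) \<le> n x * n y) \<and>
     norm_complete n"

definition unital_banach_ring :: "('a::ring_1 \<Rightarrow> real) \<Rightarrow> bool" where
  "unital_banach_ring n \<longleftrightarrow> banach_ring n \<and> n 1 = 1"

definition complete_valuation_field :: "('k::field \<Rightarrow> real) \<Rightarrow> bool" where
  "complete_valuation_field v \<longleftrightarrow>
     (\<forall>x. 0 \<le> v x) \<and> (\<forall>x. v x = 0 \<longleftrightarrow> x = 0) \<and>
     (\<forall>x y. v (x * y) = v x * v y) \<and>
     (\<forall>x y. v (x + y) \<le> v x + v y) \<and>
     norm_complete v"

definition is_subfield :: "'k::field set \<Rightarrow> bool" where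
  "is_subfield F \<longleftrightarrow> 0 \<in> F \<and> 1 \<in> F \<and>
     (\<forall>x\<in>F. \<forall>y\<in>F. x + y \<in> F \<and> x * y \<in> F) \<and>
     (\<forall>x\<in>F. - x \<in> F) \<and> (\<forall>x\<in>F. x \<noteq> 0 \<longrightarrow> inverse x \<in> F)"

definition norm_closed :: "('a::ab_group_add \<Rightarrow> real) \<Rightarrow> 'a set \<Rightarrow> bool" where
  "norm_closed n F \<longleftrightarrow>
     (\<forall>X L. (\<forall>k. X k \<in> F) \<and> (\<lambda>k. n (X k - L)) \<longlonglongrightarrow> 0 \<longrightarrow> L \<in> F)"

definition minimal_complete_valuation_field :: "('k::field \<Rightarrow> real) \<Rightarrow> bool" where
  "minimal_complete_valuation_field v \<longleftrightarrow> complete_valuation_field v \<and>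
     (\<forall>F. is_subfield F \<and> norm_closed v F \<longrightarrow> F = UNIV)"

definition unital_K_banach_algebra ::
  "('k::field \<Rightarrow> real) \<Rightarrow> ('a::ring_1 \<Rightarrow> real) \<Rightarrow> ('k \<Rightarrow> 'a) \<Rightarrow> bool" where
  "unital_K_banach_algebra v n phi \<longleftrightarrow> unital_banach_ring n \<and>
     (\<forall>x y. phi (x + y) = phi x + phi y) \<and>
     (\<forall>x y. phi (x * y) = phi x * phi y) \<and>
     phi 1 = 1 \<and>
     (\<forall>x. n (phi x) \<le> v x) \<and>
     (\<forall>x a. phi x * a = a * phi x)"

text \<open>An element of the algebraic tensor product X \<otimes>_T Y is represented by a formal sum
  sum_k a_k \<otimes> b_k, encoded as a list of pairs. tensor_eq actX actY identifies two formal sums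
  iff they denote the same element of X \<otimes>_T Y, where actX, actY are the T-module actions.\<close>
inductive tensor_eq ::
  "('t \<Rightarrow> 'x::ab_group_add \<Rightarrow> 'x) \<Rightarrow> ('t \<Rightarrow> 'y::ab_group_add \<Rightarrow> 'y) \<Rightarrow>
   ('x \<times> 'y) list \<Rightarrow> ('x \<times> 'y) list \<Rightarrow> bool"
  for actX actY where
  te_refl: "tensor_eq actX actY xs xs"
| te_sym: "tensor_eq actX actY xs ys \<Longrightarrow> tensor_eq actX actY ys xs"
| te_trans: "tensor_eq actX actY xs ys \<Longrightarrow> tensor_eq actX actY ys zs \<Longrightarrow> tensor_eq actX actY xs zs"
| te_app: "tensor_eq actX actY xs ys \<Longrightarrow> tensor_eq actX actY (xs @ zs) (ys @ zs)"
| te_comm: "tensor_eq actX actY (xs @ ys) (ys @ xs)"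
| te_addL: "tensor_eq actX actY [(a + a', b)] [(a, b), (a', b)]"
| te_addR: "tensor_eq actX actY [(a, b + b')] [(a, b), (a, b')]"
| te_zero: "tensor_eq actX actY [(0, b)] []"
| te_scal: "tensor_eq actX actY [(actX t a, b)] [(a, actY t b)]"

definition proj_tensor_norm ::
  "('x::ab_group_add \<Rightarrow> real) \<Rightarrow> ('y::ab_group_add \<Rightarrow> real) \<Rightarrow>
   ('t \<Rightarrow> 'x \<Rightarrow> 'x) \<Rightarrow> ('t \<Rightarrow> 'y \<Rightarrow> 'y) \<Rightarrow> ('x \<times> 'y) list \<Rightarrow> real" where
  "proj_tensor_norm nX nY actX actY z =
     Inf {sum_list (map (\<lambda>(a, b). nX a * nY b) ys) | ys. tensor_eq actX actY ys z}"

definition proj_tensor_norm_um ::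
  "('x::ab_group_add \<Rightarrow> real) \<Rightarrow> ('y::ab_group_add \<Rightarrow> real) \<Rightarrow>
   ('t \<Rightarrow> 'x \<Rightarrow> 'x) \<Rightarrow> ('t \<Rightarrow> 'y \<Rightarrow> 'y) \<Rightarrow> ('x \<times> 'y) list \<Rightarrow> real" where
  "proj_tensor_norm_um nX nY actX actY z =
     Inf {foldr (\<lambda>(a, b) m. max (nX a * nY b) m) ys 0 | ys. tensor_eq actX actY ys z}"

definition int_act :: "int \<Rightarrow> 'a::ring_1 \<Rightarrow> 'a" where
  "int_act m a = of_int m * a"

definition alg_act :: "('k \<Rightarrow> 'a::ring_1) \<Rightarrow> 'k \<Rightarrow> 'a \<Rightarrow> 'a" where
  "alg_act phi c a = phi c * a"

end

theory Submission
  imports Defs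
begin

(* Every relation of R \<otimes>_Z S also holds in R \<otimes>_K S, so it remains to see that the
  projective seminorms over Z (sum or maximum of the costs |a_k| |b_k|) do not change when the
  K-relations phi t a \<otimes> b = a \<otimes> psi t b are imposed as well. The scalars t for which this
  relation already holds in R \<otimes>_Z S form a subfield of K; by minimality it is dense. For such a
  q close to t, the defect phi t a \<otimes> b - a \<otimes> psi t b equals phi (t - q) a \<otimes> b - a \<otimes> psi (t - q) b
  in R \<otimes>_Z S, which costs at most 2 |t - q| |a| |b|. So every defect has Z-seminorm 0, and a
  subadditive seminorm annihilating all defects is invariant under the K-relations. *)

section \<open>Formal sums\<close>

declare te_trans [trans]

lemma tensor_eq_append_left:
  "tensor_eq f g xs ys \<Longrightarrow> tensor_eq f g (zs @ xs) (zs @ ys)"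
  by (meson te_app te_comm te_trans)

lemma tensor_eq_append:
  "tensor_eq f g xs xs' \<Longrightarrow> tensor_eq f g ys ys' \<Longrightarrow> tensor_eq f g (xs @ ys) (xs' @ ys')"
  by (meson te_app tensor_eq_append_left te_trans)

lemma tensor_eq_cancel: "tensor_eq f g [(a, b), (- a, b)] []"
  by (metis te_addL te_sym te_trans te_zero add.right_inverse)

lemma tensor_eq_replace_head: "tensor_eq f g (u # w) ((c, y) # w @ [u, (- c, y)])"
proof -
  have "tensor_eq f g ((- c, y) # (c, y) # w) w"
    using te_app[OF tensor_eq_cancel[of f g "- c" y]] by simp
  then have "tensor_eq f g (u # (- c, y) # (c, y) # w) (u # w)"
    using tensor_eq_append_left[where zs = "[u]"] by fastforce
  moreover have "tensor_eq f g ((c, y) # w @ [u, (- c, y)]) (u # (- c, y) # (c, y) # w)"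
    using te_comm[of f g "(c, y) # w" "[u, (- c, y)]"] by simp
  ultimately show ?thesis by (meson te_sym te_trans)
qed

lemma tensor_eq_invariant:
  assumes "tensor_eq actX actY xs ys"
    and invariant: "\<And>xs ys. tensor_eq actX' actY' xs ys \<Longrightarrow> f xs = f ys"
    and scal: "\<And>t a b w. f ((actX t a, b) # w) = f ((a, actY t b) # w)"
  shows "f (xs @ w) = f (ys @ w)"
  using assms(1)
proof (induction arbitrary: w)
  case (te_app xs ys zs)
  then show ?case by simp
next
  case (te_comm xs ys)
  show ?case by (rule invariant, rule te_app, rule tensor_eq.te_comm)
next
  case (te_addL a a' b)
  show ?case by (rule invariant, rule te_app, rule tensor_eq.te_addL)
next
  case (te_addR a b b')
  show ?case by (rule invariant, rule te_app, rule tensor_eq.te_addR)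
next
  case (te_zero b)
  show ?case by (rule invariant, rule te_app, rule tensor_eq.te_zero)
next
  case (te_scal t a b)
  show ?case using scal by simp
qed simp_all

section \<open>Scalars balanced over \<int>\<close>

locale unital_ring_hom =
  fixes f :: "'a::ring_1 \<Rightarrow> 'b::ring_1"
  assumes add: "f (x + y) = f x + f y"
    and mult: "f (x * y) = f x * f y"
    and one: "f 1 = 1"

sublocale unital_ring_hom \<subseteq> additive f
  by unfold_locales (rule add)

lemma (in unital_ring_hom) of_int: "f (of_int m) = of_int m"
proof -
  have "f (of_nat k) = of_nat k" for k
    by (induction k) (simp_all add: zero add one)
  then show ?thesis
    by (cases m rule: int_cases2) (simp_all add: minus)
qed

lemma unital_ring_hom_if_K_banach_algebra:
  "unital_K_banach_algebra v n phi \<Longrightarrow> unital_ring_hom phi"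
  unfolding unital_K_banach_algebra_def unital_ring_hom_def by blast

lemma tensor_eq_int_imp_alg:
  assumes "unital_ring_hom phi" "unital_ring_hom psi"
    and "tensor_eq int_act int_act xs ys"
  shows "tensor_eq (alg_act phi) (alg_act psi) xs ys"
  using assms(3)
proof (induction)
  case (te_scal m a b)
  show ?case
    using tensor_eq.te_scal[of "alg_act phi" "alg_act psi" "of_int m" a b]
    unfolding alg_act_def int_act_def
    by (simp add: unital_ring_hom.of_int[OF assms(1)] unital_ring_hom.of_int[OF assms(2)])
qed (blast intro: tensor_eq.intros)+

definition balanced_scalars :: "('k::field \<Rightarrow> 'r::ring_1) \<Rightarrow> ('k \<Rightarrow> 's::ring_1) \<Rightarrow> 'k set" where
  "balanced_scalars phi psi =
     {t. \<forall>a b. tensor_eq int_act int_act [(phi t * a, b)] [(a, psi t * b)]}"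

context
  fixes phi :: "'k::field \<Rightarrow> 'r::ring_1" and psi :: "'k \<Rightarrow> 's::ring_1"
  assumes phi: "unital_ring_hom phi" and psi: "unital_ring_hom psi"
begin

lemma balanced_scalars_of_int: "of_int m \<in> balanced_scalars phi psi"
  using te_scal[of int_act int_act m]
  by (auto simp: balanced_scalars_def int_act_def unital_ring_hom.of_int[OF phi]
      unital_ring_hom.of_int[OF psi])

lemma balanced_scalars_add:
  assumes "s \<in> balanced_scalars phi psi" "t \<in> balanced_scalars phi psi"
  shows "s + t \<in> balanced_scalars phi psi"
  unfolding balanced_scalars_def
proof (intro CollectI allI)
  fix a :: 'r and b :: 's
  have "tensor_eq int_act int_act [(phi s * a + phi t * a, b)] ([(phi s * a, b)] @ [(phi t * a, b)])"
    by (simp add: te_addL)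
  also have "tensor_eq int_act int_act \<dots> ([(a, psi s * b)] @ [(a, psi t * b)])"
    using assms by (intro tensor_eq_append) (auto simp: balanced_scalars_def)
  also have "tensor_eq int_act int_act \<dots> [(a, psi s * b + psi t * b)]"
    by (simp add: te_addR te_sym)
  finally show "tensor_eq int_act int_act [(phi (s + t) * a, b)] [(a, psi (s + t) * b)]"
    by (simp add: unital_ring_hom.add[OF phi] unital_ring_hom.add[OF psi] distrib_right)
qed

lemma balanced_scalars_mult:
  assumes "s \<in> balanced_scalars phi psi" "t \<in> balanced_scalars phi psi"
  shows "s * t \<in> balanced_scalars phi psi"
  unfolding balanced_scalars_def
proof (intro CollectI allI)
  fix a :: 'r and b :: 's
  have "tensor_eq int_act int_act [(phi s * (phi t * a), b)] [(phi t * a, psi s * b)]"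
    using assms(1) by (simp add: balanced_scalars_def)
  also have "tensor_eq int_act int_act \<dots> [(a, psi t * (psi s * b))]"
    using assms(2) by (simp add: balanced_scalars_def)
  finally have "tensor_eq int_act int_act [(phi s * (phi t * a), b)] [(a, psi t * (psi s * b))]" .
  moreover have "phi (s * t) * a = phi s * (phi t * a)"
    by (simp add: unital_ring_hom.mult[OF phi] mult.assoc)
  moreover have "psi (s * t) * b = psi t * (psi s * b)"
    by (metis unital_ring_hom.mult[OF psi] mult.assoc mult.commute)
  ultimately show "tensor_eq int_act int_act [(phi (s * t) * a, b)] [(a, psi (s * t) * b)]"
    by simp
qed

lemma balanced_scalars_inverse:
  assumes "t \<in> balanced_scalars phi psi"
  shows "inverse t \<in> balanced_scalars phi psi"
proof (cases "t = 0")
  case True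
  then show ?thesis using balanced_scalars_of_int[of 0] by simp
next
  case False
  have inverse_cancel: "f t * (f (inverse t) * x) = x"
    if "unital_ring_hom f" for f :: "'k \<Rightarrow> 'a::ring_1" and x
    using False
    by (simp add: unital_ring_hom.mult[OF that, symmetric] unital_ring_hom.one[OF that]
        mult.assoc[symmetric])
  show ?thesis
    unfolding balanced_scalars_def
  proof (intro CollectI allI)
    fix a :: 'r and b :: 's
    have "tensor_eq int_act int_act [(phi t * (phi (inverse t) * a), psi (inverse t) * b)]
        [(phi (inverse t) * a, psi t * (psi (inverse t) * b))]"
      using assms by (simp add: balanced_scalars_def)
    then show "tensor_eq int_act int_act [(phi (inverse t) * a, b)] [(a, psi (inverse t) * b)]"
      by (simp add: inverse_cancel phi psi te_sym)
  qed
qed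

lemma is_subfield_balanced_scalars: "is_subfield (balanced_scalars phi psi)"
proof -
  have "- t \<in> balanced_scalars phi psi" if "t \<in> balanced_scalars phi psi" for t
    using balanced_scalars_mult[OF balanced_scalars_of_int[of "- 1"] that] by simp
  then show ?thesis
    unfolding is_subfield_def
    using balanced_scalars_of_int[of 0] balanced_scalars_of_int[of 1] balanced_scalars_add
      balanced_scalars_mult balanced_scalars_inverse
    by simp
qed

lemma tensor_eq_defect_shift:
  assumes q: "q \<in> balanced_scalars phi psi"
  shows "tensor_eq int_act int_act [(phi t * a, b), (- a, psi t * b)]
           [(phi (t - q) * a, b), (- a, psi (t - q) * b)]"
proof -
  define A1 A2 B1 B2 where "A1 = (phi (t - q) * a, b)" and "A2 = (phi q * a, b)"
    and "B1 = (- a, psi (t - q) * b)" and "B2 = (- a, psi q * b)"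
  have "phi t = phi (t - q) + phi q" "psi t = psi (t - q) + psi q"
    using unital_ring_hom.add[OF phi, of "t - q" q] unital_ring_hom.add[OF psi, of "t - q" q]
    by simp_all
  then have "phi t * a = phi (t - q) * a + phi q * a" "psi t * b = psi (t - q) * b + psi q * b"
    by (simp_all add: distrib_right)
  then have "tensor_eq int_act int_act [(phi t * a, b), (- a, psi t * b)] ([A1, A2] @ [B1, B2])"
    unfolding A1_def A2_def B1_def B2_def
    using tensor_eq_append[OF te_addL te_addR] by simp
  also have "tensor_eq int_act int_act \<dots> ([A1] @ ([A2] @ [B1]) @ [B2])"
    by (simp add: te_refl)
  also have "tensor_eq int_act int_act \<dots> ([A1] @ ([B1] @ [A2]) @ [B2])"
    by (intro tensor_eq_append_left te_app te_comm)
  also have "tensor_eq int_act int_act \<dots> ([A1, B1] @ [(a, psi q * b), (- a, psi q * b)])"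
  proof -
    have "tensor_eq int_act int_act [A2] [(a, psi q * b)]"
      using q unfolding A2_def balanced_scalars_def by blast
    from tensor_eq_append_left[OF te_app[OF this, of "[B2]"], of "[A1, B1]"]
    show ?thesis
      by (simp add: B2_def)
  qed
  also have "tensor_eq int_act int_act \<dots> ([A1, B1] @ [])"
    by (intro tensor_eq_append_left tensor_eq_cancel)
  finally show ?thesis
    unfolding A1_def B1_def by simp
qed

end

section \<open>Absolute values and closures of subfields\<close>

locale absolute_value =
  fixes v :: "'k::field \<Rightarrow> real"
  assumes nonneg: "0 \<le> v x"
    and eq_0_iff: "v x = 0 \<longleftrightarrow> x = 0"
    and mult: "v (x * y) = v x * v y"
    and triangle: "v (x + y) \<le> v x + v y"
begin

lemma zero [simp]: "v 0 = 0"
  by (simp add: eq_0_iff)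

lemma one [simp]: "v 1 = 1"
  using mult[of 1 1] eq_0_iff[of 1] by simp

lemma minus [simp]: "v (- x) = v x"
proof -
  have "v (- 1) * v (- 1) = 1"
    using mult[of "- 1" "- 1"] by simp
  then have "(v (- 1) - 1) * (v (- 1) + 1) = 0"
    by (simp add: algebra_simps)
  then have "v (- 1) = 1"
    using nonneg[of "- 1"] by simp
  then show ?thesis
    using mult[of "- 1" x] by simp
qed

lemma diff_commute: "v (x - y) = v (y - x)"
  using minus[of "x - y"] by simp

lemma inverse: "v (inverse x) = inverse (v x)"
proof (cases "x = 0")
  case False
  then have "v x * v (inverse x) = 1"
    using mult[of x "inverse x"] by simp
  then show ?thesis
    by (rule inverse_unique[symmetric])
qed simp

lemma abs_diff_le: "\<bar>v x - v y\<bar> \<le> v (x - y)"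
  using triangle[of "x - y" y] triangle[of "y - x" x] diff_commute[of x y]
  unfolding abs_le_iff by simp

lemma tendsto_of_tendsto_diff:
  assumes "(\<lambda>k. v (X k - x)) \<longlonglongrightarrow> 0"
  shows "(\<lambda>k. v (X k)) \<longlonglongrightarrow> v x"
proof -
  have "(\<lambda>k. v (X k) - v x) \<longlonglongrightarrow> 0"
    by (rule tendsto_0_le[OF assms, where K = 1]) (simp add: abs_diff_le abs_of_nonneg nonneg)
  then show ?thesis by (simp add: LIM_zero_iff)
qed

lemma tendsto_zero_if_bounded:
  assumes "g \<longlonglongrightarrow> 0" "\<forall>\<^sub>F k in sequentially. v (X k) \<le> g k"
  shows "(\<lambda>k. v (X k)) \<longlonglongrightarrow> 0"
  by (rule tendsto_0_le[OF assms(1), where K = 1])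
    (use assms(2) in \<open>eventually_elim, simp add: abs_of_nonneg nonneg\<close>)

end

lemma absolute_value_if_complete_valuation_field:
  "complete_valuation_field v \<Longrightarrow> absolute_value v"
  unfolding complete_valuation_field_def by unfold_locales blast+

definition valuation_closure :: "('k::field \<Rightarrow> real) \<Rightarrow> 'k set \<Rightarrow> 'k set" where
  "valuation_closure v F = {L. \<exists>X. (\<forall>k. X k \<in> F) \<and> (\<lambda>k. v (X k - L)) \<longlonglongrightarrow> 0}"

context absolute_value
begin

lemma approx_if_tendsto:
  assumes "\<forall>k. X k \<in> F" "(\<lambda>k. v (X k - L)) \<longlonglongrightarrow> 0" "e > 0"
  shows "\<exists>q\<in>F. v (L - q) < e"
proof -
  obtain N where "\<forall>k\<ge>N. norm (v (X k - L) - 0) < e"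
    using LIMSEQ_D[OF assms(2,3)] by blast
  then have "v (L - X N) < e"
    using diff_commute[of L "X N"] by auto
  then show ?thesis
    using assms(1) by blast
qed

lemma valuation_closure_iff:
  "L \<in> valuation_closure v F \<longleftrightarrow> (\<forall>e>0. \<exists>q\<in>F. v (L - q) < e)"
proof
  assume "L \<in> valuation_closure v F"
  then show "\<forall>e>0. \<exists>q\<in>F. v (L - q) < e"
    unfolding valuation_closure_def using approx_if_tendsto by blast
next
  assume "\<forall>e>0. \<exists>q\<in>F. v (L - q) < e"
  then have "\<forall>k. \<exists>q\<in>F. v (L - q) < inverse (real (Suc k))"
    by simp
  then obtain X where X: "\<forall>k. X k \<in> F" "\<forall>k. v (L - X k) < inverse (real (Suc k))"
    by metis
  have "(\<lambda>k. v (X k - L)) \<longlonglongrightarrow> 0"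
    by (rule tendsto_0_le[OF LIMSEQ_inverse_real_of_nat, where K = 1])
      (use X(2) in \<open>simp add: diff_commute abs_of_nonneg nonneg less_imp_le\<close>)
  then show "L \<in> valuation_closure v F"
    unfolding valuation_closure_def using X(1) by blast
qed

lemma subset_valuation_closure: "F \<subseteq> valuation_closure v F"
  using valuation_closure_iff by force

lemma norm_closed_valuation_closure: "norm_closed v (valuation_closure v F)"
  unfolding norm_closed_def
proof (intro allI impI)
  fix X L
  assume "(\<forall>k. X k \<in> valuation_closure v F) \<and> (\<lambda>k. v (X k - L)) \<longlonglongrightarrow> 0"
  then have L_approx: "\<exists>q'\<in>valuation_closure v F. v (L - q') < e" if "e > 0" for e
    using approx_if_tendsto that by blast
  show "L \<in> valuation_closure v F"
    unfolding valuation_closure_iff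
  proof (intro allI impI)
    fix e :: real
    assume "e > 0"
    then obtain q' where q': "q' \<in> valuation_closure v F" "v (L - q') < e / 2"
      using L_approx half_gt_zero by blast
    then obtain q where q: "q \<in> F" "v (q' - q) < e / 2"
      using \<open>e > 0\<close> half_gt_zero unfolding valuation_closure_iff by blast
    have "v (L - q) \<le> v (L - q') + v (q' - q)"
      using triangle[of "L - q'" "q' - q"] by simp
    then show "\<exists>q\<in>F. v (L - q) < e"
      using q q' by force
  qed
qed

lemma valuation_closure_add:
  assumes "\<And>x y. x \<in> F \<Longrightarrow> y \<in> F \<Longrightarrow> x + y \<in> F"
    and "x \<in> valuation_closure v F" "y \<in> valuation_closure v F"
  shows "x + y \<in> valuation_closure v F"
proof -
  obtain X Y where X: "\<forall>k. X k \<in> F" "(\<lambda>k. v (X k - x)) \<longlonglongrightarrow> 0"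
    and Y: "\<forall>k. Y k \<in> F" "(\<lambda>k. v (Y k - y)) \<longlonglongrightarrow> 0"
    using assms(2,3) unfolding valuation_closure_def by blast
  have "v (X k + Y k - (x + y)) \<le> v (X k - x) + v (Y k - y)" for k
    using triangle[of "X k - x" "Y k - y"] by (simp add: algebra_simps)
  then have "(\<lambda>k. v (X k + Y k - (x + y))) \<longlonglongrightarrow> 0"
    by (intro tendsto_zero_if_bounded[OF tendsto_add_zero[OF X(2) Y(2)]]) simp
  then show ?thesis
    unfolding valuation_closure_def using X(1) Y(1) assms(1)
    by (intro CollectI exI[of _ "\<lambda>k. X k + Y k"]) simp
qed

lemma valuation_closure_minus:
  assumes "\<And>x. x \<in> F \<Longrightarrow> - x \<in> F" and "x \<in> valuation_closure v F"
  shows "- x \<in> valuation_closure v F"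
proof -
  obtain X where X: "\<forall>k. X k \<in> F" "(\<lambda>k. v (X k - x)) \<longlonglongrightarrow> 0"
    using assms(2) unfolding valuation_closure_def by blast
  have "(\<lambda>k. v (- X k - - x)) \<longlonglongrightarrow> 0"
    using X(2) diff_commute by simp
  then show ?thesis
    unfolding valuation_closure_def using X(1) assms(1)
    by (intro CollectI exI[of _ "\<lambda>k. - X k"]) simp
qed

lemma valuation_closure_mult:
  assumes "\<And>x y. x \<in> F \<Longrightarrow> y \<in> F \<Longrightarrow> x * y \<in> F"
    and "x \<in> valuation_closure v F" "y \<in> valuation_closure v F"
  shows "x * y \<in> valuation_closure v F"
proof -
  obtain X Y where X: "\<forall>k. X k \<in> F" "(\<lambda>k. v (X k - x)) \<longlonglongrightarrow> 0"
    and Y: "\<forall>k. Y k \<in> F" "(\<lambda>k. v (Y k - y)) \<longlonglongrightarrow> 0"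
    using assms(2,3) unfolding valuation_closure_def by blast
  define g where "g k = v (X k - x) * v (Y k - y) + v x * v (Y k - y) + v (X k - x) * v y" for k
  have "g \<longlonglongrightarrow> 0 * 0 + v x * 0 + 0 * v y"
    unfolding g_def by (intro tendsto_intros X(2) Y(2))
  moreover have "v (X k * Y k - x * y) \<le> g k" for k
  proof -
    have "X k * Y k - x * y = (X k - x) * (Y k - y) + x * (Y k - y) + (X k - x) * y"
      by (simp add: algebra_simps)
    then have "v (X k * Y k - x * y)
        \<le> v ((X k - x) * (Y k - y) + x * (Y k - y)) + v ((X k - x) * y)"
      using triangle by simp
    also have "\<dots> \<le> v ((X k - x) * (Y k - y)) + v (x * (Y k - y)) + v ((X k - x) * y)"
      using triangle by (rule add_right_mono)
    finally show ?thesis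
      unfolding g_def by (simp add: mult)
  qed
  ultimately have "(\<lambda>k. v (X k * Y k - x * y)) \<longlonglongrightarrow> 0"
    using tendsto_zero_if_bounded by (simp add: always_eventually)
  then show ?thesis
    unfolding valuation_closure_def using X(1) Y(1) assms(1)
    by (intro CollectI exI[of _ "\<lambda>k. X k * Y k"]) simp
qed

lemma valuation_closure_inverse:
  assumes "\<And>x. x \<in> F \<Longrightarrow> inverse x \<in> F" and "x \<in> valuation_closure v F"
  shows "inverse x \<in> valuation_closure v F"
proof (cases "x = 0")
  case False
  obtain X where X: "\<forall>k. X k \<in> F" "(\<lambda>k. v (X k - x)) \<longlonglongrightarrow> 0"
    using assms(2) unfolding valuation_closure_def by blast
  have vX: "(\<lambda>k. v (X k)) \<longlonglongrightarrow> v x"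
    by (rule tendsto_of_tendsto_diff[OF X(2)])
  have "v x \<noteq> 0"
    using False eq_0_iff by blast
  then have "0 < v x"
    using nonneg[of x] by linarith
  define g where "g k = inverse (v (X k)) * v (X k - x) * inverse (v x)" for k
  have "g \<longlonglongrightarrow> inverse (v x) * 0 * inverse (v x)"
    unfolding g_def by (intro tendsto_intros vX X(2) \<open>v x \<noteq> 0\<close>)
  moreover have "\<forall>\<^sub>F k in sequentially. v (inverse (X k) - inverse x) \<le> g k"
    using order_tendstoD(1)[OF vX \<open>0 < v x\<close>]
  proof eventually_elim
    case (elim k)
    then have "X k \<noteq> 0"
      by auto
    then have "inverse (X k) - inverse x = - (inverse (X k) * (X k - x) * inverse x)"
      using False by (rule inverse_diff_inverse)
    then show ?case
      unfolding g_def by (simp only: minus mult inverse order.refl)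
  qed
  ultimately have "(\<lambda>k. v (inverse (X k) - inverse x)) \<longlonglongrightarrow> 0"
    by (intro tendsto_zero_if_bounded) simp_all
  then show ?thesis
    unfolding valuation_closure_def using X(1) assms(1)
    by (intro CollectI exI[of _ "\<lambda>k. inverse (X k)"]) simp
qed (use assms(2) in simp)

lemma is_subfield_valuation_closure:
  assumes "is_subfield F"
  shows "is_subfield (valuation_closure v F)"
proof -
  have F: "0 \<in> F" "1 \<in> F" "\<And>x y. x \<in> F \<Longrightarrow> y \<in> F \<Longrightarrow> x + y \<in> F"
    "\<And>x y. x \<in> F \<Longrightarrow> y \<in> F \<Longrightarrow> x * y \<in> F" "\<And>x. x \<in> F \<Longrightarrow> - x \<in> F"
    using assms unfolding is_subfield_def by blast+
  have F_inverse: "inverse x \<in> F" if "x \<in> F" for x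
    using assms that F(1) unfolding is_subfield_def by (cases "x = 0") auto
  show ?thesis
    unfolding is_subfield_def
    using subset_valuation_closure[of F] F(1,2) valuation_closure_add[OF F(3)]
      valuation_closure_mult[OF F(4)] valuation_closure_minus[OF F(5)]
      valuation_closure_inverse[OF F_inverse]
    by (intro conjI ballI impI) auto
qed

end

lemma subfield_dense_if_minimal:
  assumes "minimal_complete_valuation_field v" "is_subfield F" "e > 0"
  shows "\<exists>q\<in>F. v (t - q) < e"
proof -
  interpret absolute_value v
    using assms(1) absolute_value_if_complete_valuation_field
    unfolding minimal_complete_valuation_field_def by blast
  have "valuation_closure v F = UNIV"
    using assms(1,2) is_subfield_valuation_closure norm_closed_valuation_closure
    unfolding minimal_complete_valuation_field_def by blast
  then show ?thesis
    using valuation_closure_iff assms(3) by blast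
qed

section \<open>Seminorms defined by a subadditive cost\<close>

definition tensor_seminorm ::
  "(('x \<times> 'y) list \<Rightarrow> real) \<Rightarrow> ('t \<Rightarrow> 'x::ab_group_add \<Rightarrow> 'x) \<Rightarrow>
   ('t \<Rightarrow> 'y::ab_group_add \<Rightarrow> 'y) \<Rightarrow> ('x \<times> 'y) list \<Rightarrow> real" where
  "tensor_seminorm C actX actY z = Inf {C ys | ys. tensor_eq actX actY ys z}"

lemma tensor_seminorm_cong:
  assumes "tensor_eq actX actY x y"
  shows "tensor_seminorm C actX actY x = tensor_seminorm C actX actY y"
proof -
  have "tensor_eq actX actY ys x \<longleftrightarrow> tensor_eq actX actY ys y" for ys
    using assms te_trans te_sym by metis
  then show ?thesis
    unfolding tensor_seminorm_def by simp
qed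

locale subadditive_cost =
  fixes C :: "('x::ab_group_add \<times> 'y::ab_group_add) list \<Rightarrow> real"
  assumes nonneg: "0 \<le> C ys"
    and append_le: "C (ys @ zs) \<le> C ys + C zs"
begin

lemma tensor_seminorm_le:
  "tensor_eq actX actY ys z \<Longrightarrow> tensor_seminorm C actX actY z \<le> C ys"
  unfolding tensor_seminorm_def
  by (rule cInf_lower) (auto intro: bdd_belowI[of _ 0] nonneg)

lemma tensor_seminorm_greatest:
  "(\<And>ys. tensor_eq actX actY ys z \<Longrightarrow> c \<le> C ys) \<Longrightarrow> c \<le> tensor_seminorm C actX actY z"
  unfolding tensor_seminorm_def
  by (rule cInf_greatest) (use te_refl[of actX actY z] in auto)

lemma tensor_seminorm_append_le:
  "tensor_seminorm C actX actY (y @ d) \<le> tensor_seminorm C actX actY y + tensor_seminorm C actX actY d"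
proof -
  have "tensor_seminorm C actX actY (y @ d) - C q \<le> tensor_seminorm C actX actY y"
    if q: "tensor_eq actX actY q d" for q
  proof (rule tensor_seminorm_greatest)
    fix p assume "tensor_eq actX actY p y"
    then have "tensor_seminorm C actX actY (y @ d) \<le> C (p @ q)"
      using q by (intro tensor_seminorm_le tensor_eq_append)
    then show "tensor_seminorm C actX actY (y @ d) - C q \<le> C p"
      using append_le[of p q] by linarith
  qed
  then have "tensor_seminorm C actX actY (y @ d) - tensor_seminorm C actX actY y
      \<le> tensor_seminorm C actX actY d"
    by (intro tensor_seminorm_greatest) (simp add: algebra_simps)
  then show ?thesis
    by simp
qed

lemma tensor_seminorm_swap_le:
  assumes "tensor_seminorm C actX actY [u, (- c, y)] \<le> 0"
  shows "tensor_seminorm C actX actY (u # w) \<le> tensor_seminorm C actX actY ((c, y) # w)"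
  using tensor_seminorm_cong[OF tensor_eq_replace_head[of actX actY u w c y], of C]
    tensor_seminorm_append_le[of actX actY "(c, y) # w" "[u, (- c, y)]"] assms
  by simp

lemma tensor_seminorm_eq_if_defects_vanish:
  assumes finer: "\<And>xs ys. tensor_eq actX actY xs ys \<Longrightarrow> tensor_eq actX' actY' xs ys"
    and defect: "\<And>t a b. tensor_seminorm C actX actY [(actX' t a, b), (- a, actY' t b)] \<le> 0"
    and defect': "\<And>t a b. tensor_seminorm C actX actY [(a, actY' t b), (- actX' t a, b)] \<le> 0"
  shows "tensor_seminorm C actX' actY' z = tensor_seminorm C actX actY z"
proof (rule antisym)
  show "tensor_seminorm C actX' actY' z \<le> tensor_seminorm C actX actY z"
    using finer by (intro tensor_seminorm_greatest tensor_seminorm_le)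
  have invariant: "tensor_seminorm C actX actY (xs @ w) = tensor_seminorm C actX actY (ys @ w)"
    if "tensor_eq actX' actY' xs ys" for xs ys w
  proof (rule tensor_eq_invariant[OF that tensor_seminorm_cong])
    fix t a b w
    show "tensor_seminorm C actX actY ((actX' t a, b) # w)
        = tensor_seminorm C actX actY ((a, actY' t b) # w)"
      using tensor_seminorm_swap_le[OF defect] tensor_seminorm_swap_le[OF defect']
      by (simp add: order_antisym)
  qed
  show "tensor_seminorm C actX actY z \<le> tensor_seminorm C actX' actY' z"
  proof (rule tensor_seminorm_greatest)
    fix ys assume "tensor_eq actX' actY' ys z"
    then have "tensor_seminorm C actX actY z = tensor_seminorm C actX actY ys"
      using invariant[of ys z "[]"] by simp
    also have "\<dots> \<le> C ys"
      by (rule tensor_seminorm_le[OF te_refl])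
    finally show "tensor_seminorm C actX actY z \<le> C ys" .
  qed
qed

end

section \<open>Comparison of the seminorms over \<int> and over K\<close>

lemma K_banach_algebra_norm_scalar_le:
  assumes "unital_K_banach_algebra v n phi"
  shows "n (phi s * a) \<le> v s * n a"
proof -
  have "n (phi s * a) \<le> n (phi s) * n a" "n (phi s) \<le> v s" "0 \<le> n a"
    using assms unfolding unital_K_banach_algebra_def unital_banach_ring_def banach_ring_def
    by blast+
  then show ?thesis
    using mult_right_mono[of "n (phi s)" "v s" "n a"] by linarith
qed

lemma K_banach_algebra_norm:
  assumes "unital_K_banach_algebra v n phi"
  shows "0 \<le> n a" "n (- a) = n a"
  using assms unfolding unital_K_banach_algebra_def unital_banach_ring_def banach_ring_def
  by blast+

lemma K_defect_le:
  fixes C :: "('r::ring_1 \<times> 's::ring_1) list \<Rightarrow> real"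
  assumes C: "subadditive_cost C"
    and R: "unital_K_banach_algebra v nX phi" and S: "unital_K_banach_algebra v nY psi"
    and single: "\<And>x y. C [(x, y)] \<le> nX x * nY y"
    and q: "q \<in> balanced_scalars phi psi"
  shows "tensor_seminorm C int_act int_act [(phi t * a, b), (- a, psi t * b)]
           \<le> 2 * v (t - q) * (nX a * nY b)"
proof -
  have "tensor_eq int_act int_act ([(phi (t - q) * a, b)] @ [(- a, psi (t - q) * b)])
      [(phi t * a, b), (- a, psi t * b)]"
    using te_sym[OF tensor_eq_defect_shift[OF unital_ring_hom_if_K_banach_algebra[OF R]
        unital_ring_hom_if_K_banach_algebra[OF S] q]]
    by simp
  then have "tensor_seminorm C int_act int_act [(phi t * a, b), (- a, psi t * b)]
      \<le> C ([(phi (t - q) * a, b)] @ [(- a, psi (t - q) * b)])"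
    by (rule subadditive_cost.tensor_seminorm_le[OF C])
  also have "\<dots> \<le> C [(phi (t - q) * a, b)] + C [(- a, psi (t - q) * b)]"
    by (rule subadditive_cost.append_le[OF C])
  also have "\<dots> \<le> nX (phi (t - q) * a) * nY b + nX (- a) * nY (psi (t - q) * b)"
    by (intro add_mono single)
  also have "\<dots> \<le> (v (t - q) * nX a) * nY b + nX a * (v (t - q) * nY b)"
    unfolding K_banach_algebra_norm(2)[OF R]
    by (intro add_mono mult_right_mono[OF K_banach_algebra_norm_scalar_le[OF R]]
        mult_left_mono[OF K_banach_algebra_norm_scalar_le[OF S]] K_banach_algebra_norm(1)[OF R]
        K_banach_algebra_norm(1)[OF S])
  finally show ?thesis
    by (simp add: algebra_simps)
qed

lemma K_defect_vanishes:
  fixes C :: "('r::ring_1 \<times> 's::ring_1) list \<Rightarrow> real"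
  assumes C: "subadditive_cost C"
    and K: "minimal_complete_valuation_field v"
    and R: "unital_K_banach_algebra v nX phi" and S: "unital_K_banach_algebra v nY psi"
    and single: "\<And>x y. C [(x, y)] \<le> nX x * nY y"
  shows "tensor_seminorm C int_act int_act [(phi t * a, b), (- a, psi t * b)] \<le> 0"
proof (rule field_le_epsilon)
  fix e :: real
  assume "0 < e"
  define M where "M = nX a * nY b"
  have "0 \<le> M"
    unfolding M_def using K_banach_algebra_norm(1)[OF R] K_banach_algebra_norm(1)[OF S] by simp
  have "0 < e / (2 * M + 1)"
    using \<open>0 < e\<close> \<open>0 \<le> M\<close> by simp
  then obtain q where q: "q \<in> balanced_scalars phi psi" "v (t - q) < e / (2 * M + 1)"
    using subfield_dense_if_minimal[OF K is_subfield_balanced_scalars]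
      unital_ring_hom_if_K_banach_algebra[OF R] unital_ring_hom_if_K_banach_algebra[OF S]
    by blast
  have "0 \<le> v (t - q)"
    using K unfolding minimal_complete_valuation_field_def complete_valuation_field_def by blast
  then have "2 * v (t - q) * M \<le> e"
    using q(2) \<open>0 \<le> M\<close> by (simp add: field_simps)
  then show "tensor_seminorm C int_act int_act [(phi t * a, b), (- a, psi t * b)] \<le> 0 + e"
    using K_defect_le[OF C R S single q(1), of t a b] unfolding M_def by simp
qed

lemma tensor_seminorm_alg_eq_int:
  fixes C :: "('r::ring_1 \<times> 's::ring_1) list \<Rightarrow> real"
  assumes C: "subadditive_cost C"
    and K: "minimal_complete_valuation_field v"
    and R: "unital_K_banach_algebra v nX phi" and S: "unital_K_banach_algebra v nY psi"
    and single: "\<And>x y. C [(x, y)] \<le> nX x * nY y"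
  shows "tensor_seminorm C (alg_act phi) (alg_act psi) z = tensor_seminorm C int_act int_act z"
proof (rule subadditive_cost.tensor_seminorm_eq_if_defects_vanish[OF C])
  show "tensor_eq (alg_act phi) (alg_act psi) xs ys" if "tensor_eq int_act int_act xs ys" for xs ys
    using tensor_eq_int_imp_alg[OF unital_ring_hom_if_K_banach_algebra[OF R]
        unital_ring_hom_if_K_banach_algebra[OF S] that] .
  note defect = K_defect_vanishes[OF C K R S single]
  show "tensor_seminorm C int_act int_act [(alg_act phi t a, b), (- a, alg_act psi t b)] \<le> 0"
    for t a b
    using defect unfolding alg_act_def .
  show "tensor_seminorm C int_act int_act [(a, alg_act psi t b), (- alg_act phi t a, b)] \<le> 0"
    for t a b
    using tensor_seminorm_cong[OF te_comm[of int_act int_act "[_]" "[_]"], of C] defect[of t "- a" b]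
    unfolding alg_act_def by simp
qed

lemma subadditive_cost_sum:
  assumes "\<And>x. 0 \<le> nX x" "\<And>y. 0 \<le> nY y"
  shows "subadditive_cost (\<lambda>ys. sum_list (map (\<lambda>(a, b). nX a * nY b) ys))"
  by unfold_locales (auto intro!: sum_list_nonneg simp: assms)

lemma foldr_max_init:
  "(0::real) \<le> c \<Longrightarrow>
   foldr (\<lambda>(a, b) m. max (f a b) m) ys c = max (foldr (\<lambda>(a, b) m. max (f a b) m) ys 0) c"
  by (induction ys) (auto simp: max.assoc)

lemma subadditive_cost_max:
  assumes "\<And>x. 0 \<le> nX x" "\<And>y. 0 \<le> nY y"
  shows "subadditive_cost (\<lambda>ys. foldr (\<lambda>(a, b) m. max (nX a * nY b) m) ys 0)"
proof
  let ?C = "\<lambda>ys. foldr (\<lambda>(a, b) m. max (nX a * nY b) m) ys (0::real)"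
  show nonneg: "0 \<le> ?C ys" for ys
    by (induction ys) auto
  show "?C (ys @ zs) \<le> ?C ys + ?C zs" for ys zs
    using foldr_max_init[OF nonneg, of "\<lambda>a b. nX a * nY b" ys zs] nonneg[of ys] nonneg[of zs]
    by simp
qed

theorem lemma2p3:
  fixes v :: "'k::field \<Rightarrow> real"
    and nR :: "'r::ring_1 \<Rightarrow> real" and nS :: "'s::ring_1 \<Rightarrow> real"
    and phi :: "'k \<Rightarrow> 'r" and psi :: "'k \<Rightarrow> 's"
  assumes "minimal_complete_valuation_field v"
    and "unital_K_banach_algebra v nR phi"
    and "unital_K_banach_algebra v nS psi"
  shows "(\<forall>xs ys. tensor_eq int_act int_act xs ys \<longrightarrow> tensor_eq (alg_act phi) (alg_act psi) xs ys)
       \<and> (\<forall>z. proj_tensor_norm nR nS (alg_act phi) (alg_act psi) z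
               = proj_tensor_norm nR nS int_act int_act z)
       \<and> (\<forall>z. proj_tensor_norm_um nR nS (alg_act phi) (alg_act psi) z
               = proj_tensor_norm_um nR nS int_act int_act z)"
proof (intro conjI allI impI)
  show "tensor_eq (alg_act phi) (alg_act psi) xs ys" if "tensor_eq int_act int_act xs ys" for xs ys
    by (rule tensor_eq_int_imp_alg[OF unital_ring_hom_if_K_banach_algebra[OF assms(2)]
          unital_ring_hom_if_K_banach_algebra[OF assms(3)] that])
  note norm_nonneg = K_banach_algebra_norm(1)[OF assms(2)] K_banach_algebra_norm(1)[OF assms(3)]
  show "proj_tensor_norm nR nS (alg_act phi) (alg_act psi) z = proj_tensor_norm nR nS int_act int_act z"
    for z
    using tensor_seminorm_alg_eq_int[OF subadditive_cost_sum[OF norm_nonneg] assms]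
    unfolding proj_tensor_norm_def tensor_seminorm_def by simp
  show "proj_tensor_norm_um nR nS (alg_act phi) (alg_act psi) z
      = proj_tensor_norm_um nR nS int_act int_act z" for z
    using tensor_seminorm_alg_eq_int[OF subadditive_cost_max[OF norm_nonneg] assms]
      mult_nonneg_nonneg[OF norm_nonneg]
    unfolding proj_tensor_norm_um_def tensor_seminorm_def by simp
qed

end
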